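(* Let $k\ge2$, $n\ge1$ be integers, let $\bar{\mathcal{P}}\in\mathbb{R}^{[k,n]}$ be a columnwise-substochastic tensor, $\mathbf{v}\in\mathbb{R}^n$ a stochastic vector and $\alpha\in[0,1)$ with $\varsigma:=(2k-3)\alpha(1-\alpha)^{-\frac{k-2}{k-1}}<1$. Then the MLPPR system $(\mathbf{e}^T\mathbf{y})^{k-2}\mathbf{y}-\alpha\bar{\mathcal{P}}\mathbf{y}^{k-1}=\mathbf{v}$ has a unique nonnegative solution $\mathbf{y}_*$ in $\Delta:=\{\mathbf{y}\in\mathbb{R}^n_+:\mathbf{e}^T\mathbf{y}\le(1-\alpha)^{-\frac{1}{k-1}}\}$.
   Context: For $\mathcal{P}\in\mathbb{R}^{[k,n]}$ (real tensors of order $k$, dimension $n$) and $\mathbf{y}\in\mathbb{R}^n$, $(\mathcal{P}\mathbf{y}^{k-1})_i=\sum_{i_2,\dots,i_k}p_{i i_2\dots i_k}y_{i_2}\cdots y_{i_k}$. $\bar{\mathcal{P}}$ is columnwise-substochastic if its entries are nonnegative and $\sum_{i}\bar p_{i i_2\dots i_k}\le1$ for all $i_2,\dots,i_k$. $\mathbf{e}$ is the all-ones vector; a stochastic vector is nonnegative with entries summing to $1$. The MLPPR system $(I\circ\mathbf{e}^{\circ(k-2)}-\alpha\bar{\mathcal{P}})\mathbf{y}^{k-1}=\mathbf{v}$ is exactly $(\mathbf{e}^T\mathbf{y})^{k-2}\mathbf{y}-\alpha\bar{\mathcal{P}}\mathbf{y}^{k-1}=\mathbf{v}$. *)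

theory Defs
  imports "HOL-Analysis.Analysis"
begin

text \<open>A real tensor of order k and dimension n = CARD('n) is represented as a function
  on index lists; the entry p_{i i_2 ... i_k} is P [i, i_2, ..., i_k]. Only lists of
  length k are relevant.\<close>

definition index_tuples :: "nat \<Rightarrow> 'n::finite list set" where
  "index_tuples m = {js. length js = m}"

definition tensor_apply :: "nat \<Rightarrow> ('n::finite list \<Rightarrow> real) \<Rightarrow> real^'n \<Rightarrow> real^'n" where
  "tensor_apply k P y = (\<chi> i. \<Sum>js\<in>index_tuples (k - 1). P (i # js) * prod_list (map (\<lambda>j. y $ j) js))"

definition col_substochastic :: "nat \<Rightarrow> ('n::finite list \<Rightarrow> real) \<Rightarrow> bool" where
  "col_substochastic k P \<longleftrightarrow>
     (\<forall>js\<in>index_tuples (k - 1). (\<forall>i. 0 \<le> P (i # js)) \<and> (\<Sum>i\<in>UNIV. P (i # js)) \<le> 1)"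

definition esum :: "real^'n::finite \<Rightarrow> real" where
  "esum y = (\<Sum>i\<in>UNIV. y $ i)"

definition stochastic_vec :: "real^'n::finite \<Rightarrow> bool" where
  "stochastic_vec v \<longleftrightarrow> (\<forall>i. 0 \<le> v $ i) \<and> esum v = 1"

definition Delta_set :: "nat \<Rightarrow> real \<Rightarrow> (real^'n::finite) set" where
  "Delta_set k \<alpha> = {y. (\<forall>i. 0 \<le> y $ i) \<and> esum y \<le> (1 - \<alpha>) powr (- 1 / (real k - 1))}"

end

theory Submission
  imports Defs
begin

text \<open>Existence: by Brouwer's theorem the map x \<mapsto> \<alpha> P x^(k-1) + (1 - \<alpha> e^T P x^(k-1)) v
  has a fixed point x on the standard simplex. Since y \<mapsto> P y^(k-1) is homogeneous of degree k - 1,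
  the multiple y = w^(-1/(k-1)) x with w = 1 - \<alpha> e^T P x^(k-1) \<ge> 1 - \<alpha> solves the system and lies in \<Delta>.

  Uniqueness: summing the equation shows that a solution y has s = e^T y \<ge> 1 and
  s^(k-1) = 1 + \<alpha> e^T P y^(k-1). On \<Delta> the map y \<mapsto> P y^(k-1) is (k-1) c^(k-2)-Lipschitz in the
  1-norm, where c = (1-\<alpha>)^(-1/(k-1)), and for 1 \<le> t \<le> s one has
  (k-1)(s^(k-2) - t^(k-2)) \<le> (k-2)(s^(k-1) - t^(k-1)). For two solutions y, z with sums s \<ge> t,
  writing s^(k-2) (y - z) = \<alpha> (P y^(k-1) - P z^(k-1)) - (s^(k-2) - t^(k-2)) z then gives
  |y - z|_1 \<le> \<varsigma> |y - z|_1, so y = z.\<close>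

abbreviation mlppr_lhs :: "nat \<Rightarrow> ('n::finite list \<Rightarrow> real) \<Rightarrow> real \<Rightarrow> real^'n \<Rightarrow> real^'n" where
  "mlppr_lhs k P \<alpha> y \<equiv> (esum y) ^ (k - 2) *\<^sub>R y - \<alpha> *\<^sub>R tensor_apply k P y"

definition norm1 :: "real^'n::finite \<Rightarrow> real" where
  "norm1 x = (\<Sum>i\<in>UNIV. \<bar>x $ i\<bar>)"

abbreviation tuple_prod :: "real^'n::finite \<Rightarrow> 'n list \<Rightarrow> real" where
  "tuple_prod y js \<equiv> prod_list (map (\<lambda>j. y $ j) js)"

lemma esum_add: "esum (x + y) = esum x + esum y"
  unfolding esum_def by (simp add: sum.distrib)

lemma esum_diff: "esum (x - y) = esum x - esum y"
  unfolding esum_def by (simp add: sum_subtractf)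

lemma esum_scaleR: "esum (c *\<^sub>R x) = c * esum x"
  unfolding esum_def by (simp add: sum_distrib_left)

lemma esum_nonneg: "\<forall>i. 0 \<le> y $ i \<Longrightarrow> 0 \<le> esum y"
  unfolding esum_def by (simp add: sum_nonneg)

lemma continuous_on_esum: "continuous_on S (esum :: real^'n::finite \<Rightarrow> real)"
  unfolding esum_def by (intro continuous_on_sum continuous_on_component continuous_on_id)

lemma norm1_nonneg: "0 \<le> norm1 x"
  unfolding norm1_def by (simp add: sum_nonneg)

lemma norm1_eq_esum: "\<forall>i. 0 \<le> y $ i \<Longrightarrow> norm1 y = esum y"
  unfolding norm1_def esum_def by simp

lemma abs_esum_le_norm1: "\<bar>esum x\<bar> \<le> norm1 x"
  unfolding esum_def norm1_def by (rule sum_abs)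

lemma norm1_scaleR: "norm1 (c *\<^sub>R x) = \<bar>c\<bar> * norm1 x"
  unfolding norm1_def by (simp add: sum_distrib_left abs_mult)

lemma norm1_diff_le: "norm1 (x - y) \<le> norm1 x + norm1 y"
  unfolding norm1_def by (simp add: sum.distrib[symmetric] sum_mono abs_triangle_ineq4)

lemma norm1_eq_0_iff: "norm1 x = 0 \<longleftrightarrow> x = 0"
  unfolding norm1_def by (simp add: sum_nonneg_eq_0_iff vec_eq_iff)

lemma index_tuples_0: "index_tuples 0 = {[]}"
  unfolding index_tuples_def by auto

lemma index_tuples_Suc:
  "index_tuples (Suc m) = (\<lambda>(j, js). j # js) ` (UNIV \<times> index_tuples m)"
  unfolding index_tuples_def by (auto simp: image_iff length_Suc_conv)

lemma sum_index_tuples_Suc: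
  "(\<Sum>js\<in>index_tuples (Suc m). f js) = (\<Sum>j\<in>UNIV. \<Sum>js\<in>index_tuples m. f (j # js :: 'n::finite list))"
proof -
  have "inj_on (\<lambda>(j, js). j # js) (UNIV \<times> index_tuples m)"
    by (auto simp: inj_on_def)
  then have "(\<Sum>js\<in>index_tuples (Suc m). f js) = (\<Sum>(j, js)\<in>UNIV \<times> index_tuples m. f (j # js))"
    unfolding index_tuples_Suc by (subst sum.reindex) (auto simp: case_prod_beta')
  then show ?thesis
    by (simp add: sum.cartesian_product)
qed

lemma sum_tuple_prod: "(\<Sum>js\<in>index_tuples m. tuple_prod y js) = esum y ^ m"
proof (induction m)
  case 0
  then show ?case by (simp add: index_tuples_0)
next
  case (Suc m)
  then show ?case
    by (simp add: sum_index_tuples_Suc sum_distrib_left[symmetric] sum_distrib_right[symmetric]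
        esum_def mult.commute)
qed

lemma tuple_prod_nonneg: "\<forall>i. 0 \<le> y $ i \<Longrightarrow> 0 \<le> tuple_prod y js"
  by (induction js) auto

lemma tuple_prod_scaleR: "tuple_prod (c *\<^sub>R y) js = c ^ length js * tuple_prod y js"
  by (induction js) auto

lemma continuous_on_tuple_prod: "continuous_on S (\<lambda>y::real^'n::finite. tuple_prod y js)"
  by (induction js) (auto intro!: continuous_on_mult continuous_on_component continuous_on_id)

lemma sum_abs_tuple_prod_diff_le:
  fixes y z :: "real^'n::finite"
  assumes y: "\<forall>i. 0 \<le> y $ i" and z: "\<forall>i. 0 \<le> z $ i"
    and sy: "esum y \<le> M" and sz: "esum z \<le> M"
  shows "(\<Sum>js\<in>index_tuples m. \<bar>tuple_prod y js - tuple_prod z js\<bar>)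
    \<le> real m * M ^ (m - 1) * norm1 (y - z)"
proof (induction m)
  case 0
  then show ?case by (simp add: index_tuples_0)
next
  case (Suc m)
  let ?\<Delta> = "\<lambda>js. \<bar>tuple_prod y js - tuple_prod z js\<bar>"
  have M: "0 \<le> M" using esum_nonneg[OF y] sy by linarith
  have "(\<Sum>js\<in>index_tuples (Suc m). ?\<Delta> js)
      = (\<Sum>j\<in>UNIV. \<Sum>js\<in>index_tuples m.
          \<bar>(y $ j - z $ j) * tuple_prod y js + z $ j * (tuple_prod y js - tuple_prod z js)\<bar>)"
    by (simp add: sum_index_tuples_Suc algebra_simps)
  also have "\<dots> \<le> (\<Sum>j\<in>UNIV. \<Sum>js\<in>index_tuples m. \<bar>y $ j - z $ j\<bar> * tuple_prod y js + z $ j * ?\<Delta> js)"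
    using y z by (intro sum_mono order.trans[OF abs_triangle_ineq]) (simp add: abs_mult tuple_prod_nonneg)
  also have "\<dots> = norm1 (y - z) * esum y ^ m + esum z * (\<Sum>js\<in>index_tuples m. ?\<Delta> js)"
    by (simp add: sum.distrib sum_distrib_left[symmetric] sum_distrib_right[symmetric] sum_tuple_prod
        norm1_def esum_def)
  also have "\<dots> \<le> norm1 (y - z) * M ^ m + M * (real m * M ^ (m - 1) * norm1 (y - z))"
    using Suc sy sz M esum_nonneg[OF y] esum_nonneg[OF z] norm1_nonneg[of "y - z"]
    by (intro add_mono mult_mono power_mono) (auto simp: sum_nonneg)
  also have "\<dots> = real (Suc m) * M ^ (Suc m - 1) * norm1 (y - z)"
    by (cases m) (auto simp: algebra_simps)
  finally show ?case .
qed

lemma tensor_apply_nth: "tensor_apply k P y $ i = (\<Sum>js\<in>index_tuples (k - 1). P (i # js) * tuple_prod y js)"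
  unfolding tensor_apply_def by simp

lemma tensor_apply_nonneg:
  assumes "col_substochastic k P" "\<forall>i. 0 \<le> y $ i"
  shows "0 \<le> tensor_apply k P y $ i"
  using assms unfolding tensor_apply_nth col_substochastic_def
  by (auto intro!: sum_nonneg mult_nonneg_nonneg tuple_prod_nonneg)

lemma tensor_apply_scaleR: "tensor_apply k P (c *\<^sub>R y) = c ^ (k - 1) *\<^sub>R tensor_apply k P y"
  unfolding tensor_apply_def
  by (simp add: vec_eq_iff tuple_prod_scaleR index_tuples_def sum_distrib_left algebra_simps)

lemma continuous_on_tensor_apply: "continuous_on S (tensor_apply k P)"
  unfolding tensor_apply_def
  by (intro continuous_on_vec_lambda continuous_on_sum continuous_on_mult continuous_on_const
      continuous_on_tuple_prod)

lemma sum_col_substochastic_le: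
  assumes "col_substochastic k P" "\<forall>js. 0 \<le> f js"
  shows "(\<Sum>i\<in>UNIV. \<Sum>js\<in>index_tuples (k - 1). P (i # js) * f js)
    \<le> (\<Sum>js\<in>index_tuples (k - 1). f js)"
proof -
  have "(\<Sum>i\<in>UNIV. \<Sum>js\<in>index_tuples (k - 1). P (i # js) * f js)
      = (\<Sum>js\<in>index_tuples (k - 1). (\<Sum>i\<in>UNIV. P (i # js)) * f js)"
    by (subst sum.swap) (simp add: sum_distrib_right)
  also have "\<dots> \<le> (\<Sum>js\<in>index_tuples (k - 1). 1 * f js)"
    using assms unfolding col_substochastic_def by (intro sum_mono mult_right_mono) auto
  finally show ?thesis by simp
qed

lemma esum_tensor_apply_le:
  assumes "col_substochastic k P" "\<forall>i. 0 \<le> y $ i"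
  shows "esum (tensor_apply k P y) \<le> esum y ^ (k - 1)"
  using sum_col_substochastic_le[OF assms(1), of "tuple_prod y"] tuple_prod_nonneg[OF assms(2)]
  unfolding esum_def tensor_apply_nth by (simp add: sum_tuple_prod[unfolded esum_def])

lemma norm1_tensor_apply_diff_le:
  assumes P: "col_substochastic k P" and y: "\<forall>i. 0 \<le> y $ i" and z: "\<forall>i. 0 \<le> z $ i"
    and sy: "esum y \<le> M" and sz: "esum z \<le> M"
  shows "norm1 (tensor_apply k P y - tensor_apply k P z) \<le> real (k - 1) * M ^ (k - 2) * norm1 (y - z)"
proof -
  let ?\<Delta> = "\<lambda>js. \<bar>tuple_prod y js - tuple_prod z js\<bar>"
  have "norm1 (tensor_apply k P y - tensor_apply k P z)
      = (\<Sum>i\<in>UNIV. \<bar>\<Sum>js\<in>index_tuples (k - 1). P (i # js) * (tuple_prod y js - tuple_prod z js)\<bar>)"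
    unfolding norm1_def by (simp add: tensor_apply_nth sum_subtractf[symmetric] algebra_simps)
  also have "\<dots> \<le> (\<Sum>i\<in>UNIV. \<Sum>js\<in>index_tuples (k - 1). P (i # js) * ?\<Delta> js)"
    using P unfolding col_substochastic_def
    by (intro sum_mono order.trans[OF sum_abs]) (auto simp: abs_mult)
  also have "\<dots> \<le> (\<Sum>js\<in>index_tuples (k - 1). ?\<Delta> js)"
    using P by (rule sum_col_substochastic_le) simp
  also have "\<dots> \<le> real (k - 1) * M ^ (k - 2) * norm1 (y - z)"
    using sum_abs_tuple_prod_diff_le[OF y z sy sz, of "k - 1"] by (simp add: numeral_2_eq_2 diff_diff_add)
  finally show ?thesis .
qed

lemma power_diff_le_Suc_power_diff:
  fixes a b :: real
  assumes "1 \<le> b" "b \<le> a"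
  shows "real (Suc n) * (a ^ n - b ^ n) \<le> real n * (a ^ Suc n - b ^ Suc n)"
proof -
  define f where "f u = real n * u ^ Suc n - real (Suc n) * u ^ n" for u :: real
  have "f b \<le> f a"
  proof (rule DERIV_nonneg_imp_nondecreasing[OF assms(2)])
    fix x assume "b \<le> x"
    then have "1 \<le> x" using assms(1) by linarith
    then have "x ^ (n - 1) \<le> x ^ n" by (simp add: power_increasing)
    then have "0 \<le> real n * (real (Suc n) * x ^ n) - real (Suc n) * (real n * x ^ (n - 1))"
      using mult_left_mono[of "x ^ (n - 1)" "x ^ n" "real n * real (Suc n)"] by (simp add: algebra_simps)
    moreover have "(f has_real_derivative
        real n * (real (Suc n) * x ^ n) - real (Suc n) * (real n * x ^ (n - 1))) (at x)"
      unfolding f_def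
      using DERIV_diff[OF DERIV_cmult[OF DERIV_pow[where n = "Suc n"]] DERIV_cmult[OF DERIV_pow[where n = n]]]
      by simp
    ultimately show "\<exists>f'. (f has_real_derivative f') (at x) \<and> 0 \<le> f'"
      by blast
  qed
  then show ?thesis by (simp add: f_def algebra_simps)
qed

lemma power_minus_2_mult_self: "k \<ge> 2 \<Longrightarrow> (a :: 'a::monoid_mult) ^ (k - 2) * a = a ^ (k - 1)"
  by (simp add: power_Suc2[symmetric] numeral_2_eq_2 Suc_diff_Suc)

lemma mlppr_esum_power:
  assumes "k \<ge> 2" "esum v = 1" "mlppr_lhs k P \<alpha> y = v"
  shows "esum y ^ (k - 1) = 1 + \<alpha> * esum (tensor_apply k P y)"
  using arg_cong[OF assms(3), of esum] assms(2) power_minus_2_mult_self[OF assms(1), of "esum y"]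
  by (simp add: esum_diff esum_scaleR)

lemma mlppr_esum_ge_1:
  assumes "k \<ge> 2" "col_substochastic k P" "\<forall>i. 0 \<le> y $ i" "0 \<le> \<alpha>"
    "esum v = 1" "mlppr_lhs k P \<alpha> y = v"
  shows "1 \<le> esum y"
proof -
  have "0 \<le> esum (tensor_apply k P y)"
    using esum_nonneg tensor_apply_nonneg[OF assms(2,3)] by blast
  then have "1 \<le> esum y ^ (k - 1)"
    using mlppr_esum_power[OF assms(1,5,6)] assms(4) by simp
  then show ?thesis
    using power_less_one_iff[OF esum_nonneg[OF assms(3)], of "k - 1"] assms(1) by auto
qed

lemma mlppr_power_gap_le:
  assumes k: "k \<ge> 2" and P: "col_substochastic k P" and \<alpha>: "0 \<le> \<alpha>" and v: "esum v = 1"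
    and y: "\<forall>i. 0 \<le> y $ i" "esum y \<le> c" and z: "\<forall>i. 0 \<le> z $ i" "esum z \<le> c"
    and eqy: "mlppr_lhs k P \<alpha> y = v" and eqz: "mlppr_lhs k P \<alpha> z = v"
    and ts: "esum z \<le> esum y"
  shows "esum y ^ (k - 2) - esum z ^ (k - 2) \<le> real (k - 2) * \<alpha> * c ^ (k - 2) * norm1 (y - z)"
proof -
  define s t L where "s = esum y" and "t = esum z" and "L = real (k - 1) * c ^ (k - 2) * norm1 (y - z)"
  have "s ^ (k - 1) - t ^ (k - 1) = \<alpha> * esum (tensor_apply k P y - tensor_apply k P z)"
    using mlppr_esum_power[OF k v eqy] mlppr_esum_power[OF k v eqz]
    by (simp add: s_def t_def esum_diff algebra_simps)
  also have "\<dots> \<le> \<alpha> * norm1 (tensor_apply k P y - tensor_apply k P z)"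
    by (rule mult_left_mono[OF order.trans[OF abs_ge_self abs_esum_le_norm1] \<alpha>])
  also have "\<dots> \<le> \<alpha> * L"
    unfolding L_def using norm1_tensor_apply_diff_le[OF P y(1) z(1) y(2) z(2)] \<alpha> by (rule mult_left_mono)
  finally have power_gap: "s ^ (k - 1) - t ^ (k - 1) \<le> \<alpha> * L" .
  have "1 \<le> t"
    using mlppr_esum_ge_1[OF k P z(1) \<alpha> v eqz] by (simp add: t_def)
  then have "real (k - 1) * (s ^ (k - 2) - t ^ (k - 2)) \<le> real (k - 2) * (s ^ (k - 1) - t ^ (k - 1))"
    using power_diff_le_Suc_power_diff[of t s "k - 2"] ts k
    by (simp add: s_def t_def numeral_2_eq_2 Suc_diff_Suc)
  also have "\<dots> \<le> real (k - 2) * (\<alpha> * L)"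
    using power_gap by (rule mult_left_mono) simp
  also have "\<dots> = real (k - 1) * (real (k - 2) * \<alpha> * c ^ (k - 2) * norm1 (y - z))"
    by (simp only: L_def mult_ac)
  finally show ?thesis
    using k by (simp add: s_def t_def)
qed

lemma mlppr_norm1_diff_le:
  assumes z: "\<forall>i. 0 \<le> z $ i" and \<alpha>: "0 \<le> \<alpha>" and ts: "esum z \<le> esum y"
    and eqy: "mlppr_lhs k P \<alpha> y = v" and eqz: "mlppr_lhs k P \<alpha> z = v"
  shows "esum y ^ (k - 2) * norm1 (y - z)
    \<le> \<alpha> * norm1 (tensor_apply k P y - tensor_apply k P z) + (esum y ^ (k - 2) - esum z ^ (k - 2)) * esum z"
proof -
  define s t where "s = esum y" and "t = esum z"
  have "0 \<le> t" "t \<le> s"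
    using esum_nonneg[OF z] ts by (simp_all add: s_def t_def)
  then have gap: "0 \<le> s ^ (k - 2) - t ^ (k - 2)"
    using power_mono by simp
  have "s ^ (k - 2) *\<^sub>R (y - z)
      = \<alpha> *\<^sub>R (tensor_apply k P y - tensor_apply k P z) - (s ^ (k - 2) - t ^ (k - 2)) *\<^sub>R z"
    using eqy eqz by (simp add: s_def t_def algebra_simps)
  then have "norm1 (s ^ (k - 2) *\<^sub>R (y - z))
      \<le> \<alpha> * norm1 (tensor_apply k P y - tensor_apply k P z) + (s ^ (k - 2) - t ^ (k - 2)) * t"
    using norm1_diff_le[of "\<alpha> *\<^sub>R (tensor_apply k P y - tensor_apply k P z)"
        "(s ^ (k - 2) - t ^ (k - 2)) *\<^sub>R z"] \<alpha> gap
    by (simp add: norm1_scaleR norm1_eq_esum[OF z] t_def)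
  then show ?thesis
    using \<open>0 \<le> t\<close> \<open>t \<le> s\<close> by (simp add: norm1_scaleR s_def t_def)
qed

lemma mlppr_solution_unique_ordered:
  assumes k: "k \<ge> 2" and P: "col_substochastic k P" and \<alpha>: "0 \<le> \<alpha>" and v: "esum v = 1"
    and y: "\<forall>i. 0 \<le> y $ i" "esum y \<le> c" and z: "\<forall>i. 0 \<le> z $ i" "esum z \<le> c"
    and contraction: "(2 * real k - 3) * \<alpha> * c ^ (k - 2) < 1"
    and eqy: "mlppr_lhs k P \<alpha> y = v" and eqz: "mlppr_lhs k P \<alpha> z = v"
    and ts: "esum z \<le> esum y"
  shows "y = z"
proof -
  define s t C D where "s = esum y" and "t = esum z" and "C = c ^ (k - 2)" and "D = norm1 (y - z)"
  have s1: "1 \<le> s"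
    using mlppr_esum_ge_1[OF k P y(1) \<alpha> v eqy] by (simp add: s_def)
  have "0 \<le> \<alpha> * C * D"
    using \<alpha> s1 y(2) by (simp add: C_def D_def s_def norm1_nonneg)
  have t_le: "real (k - 2) * t \<le> real (k - 2) * s ^ (k - 2)"
  proof (cases "k = 2")
    case False
    then have "s \<le> s ^ (k - 2)" using s1 k power_increasing[of 1 "k - 2" s] by simp
    then show ?thesis using ts by (intro mult_left_mono) (simp_all add: s_def t_def)
  qed simp
  have "s ^ (k - 2) * D \<le> \<alpha> * (real (k - 1) * C * D) + (real (k - 2) * \<alpha> * C * D) * t"
    using mlppr_norm1_diff_le[OF z(1) \<alpha> ts eqy eqz]
      mult_left_mono[OF norm1_tensor_apply_diff_le[OF P y(1) z(1) y(2) z(2)] \<alpha>]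
      mult_right_mono[OF mlppr_power_gap_le[OF k P \<alpha> v y z eqy eqz ts] esum_nonneg[OF z(1)]]
    by (simp add: s_def t_def C_def D_def)
  also have "\<dots> \<le> \<alpha> * C * D * real (k - 1) * s ^ (k - 2) + \<alpha> * C * D * (real (k - 2) * s ^ (k - 2))"
  proof (rule add_mono)
    have "\<alpha> * C * D * real (k - 1) * 1 \<le> \<alpha> * C * D * real (k - 1) * s ^ (k - 2)"
      using \<open>0 \<le> \<alpha> * C * D\<close> s1 by (intro mult_left_mono) simp_all
    then show "\<alpha> * (real (k - 1) * C * D) \<le> \<alpha> * C * D * real (k - 1) * s ^ (k - 2)"
      by (simp add: mult_ac)
    show "real (k - 2) * \<alpha> * C * D * t \<le> \<alpha> * C * D * (real (k - 2) * s ^ (k - 2))"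
      using mult_left_mono[OF t_le \<open>0 \<le> \<alpha> * C * D\<close>] by (simp add: mult_ac)
  qed
  also have "\<dots> = (2 * real k - 3) * \<alpha> * C * D * s ^ (k - 2)"
    using k by (simp add: of_nat_diff algebra_simps)
  finally have "D * (s ^ (k - 2) * (1 - (2 * real k - 3) * \<alpha> * C)) \<le> 0"
    by (simp add: algebra_simps)
  moreover have "0 < s ^ (k - 2) * (1 - (2 * real k - 3) * \<alpha> * C)"
    using s1 contraction by (simp add: C_def)
  ultimately have "D \<le> 0"
    using mult_le_0_iff[of D "s ^ (k - 2) * (1 - (2 * real k - 3) * \<alpha> * C)"] by linarith
  then show ?thesis
    using norm1_nonneg[of "y - z"] by (simp add: D_def norm1_eq_0_iff)
qed

lemma mlppr_solution_unique:
  assumes "k \<ge> 2" "col_substochastic k P" "0 \<le> \<alpha>" "esum v = 1"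
    and "\<forall>i. 0 \<le> y $ i" "esum y \<le> c" "\<forall>i. 0 \<le> z $ i" "esum z \<le> c"
    and "(2 * real k - 3) * \<alpha> * c ^ (k - 2) < 1"
    and "mlppr_lhs k P \<alpha> y = v" "mlppr_lhs k P \<alpha> z = v"
  shows "y = z"
  using linorder_le_cases[of "esum z" "esum y"]
    mlppr_solution_unique_ordered[OF assms] mlppr_solution_unique_ordered[OF assms(1-4,7,8,5,6,9,11,10)]
  by auto

lemma mlppr_simplex_fixed_point:
  assumes P: "col_substochastic k P" and v: "stochastic_vec v" and \<alpha>: "0 \<le> \<alpha>" "\<alpha> \<le> 1"
  obtains x :: "real^'n::finite" where "\<forall>i. 0 \<le> x $ i" "esum x = 1"
    "x = \<alpha> *\<^sub>R tensor_apply k P x + (1 - \<alpha> * esum (tensor_apply k P x)) *\<^sub>R v"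
proof -
  define S :: "(real^'n) set" where "S = {x. (\<forall>i. 0 \<le> x $ i) \<and> esum x = 1}"
  define f where "f x = \<alpha> *\<^sub>R tensor_apply k P x + (1 - \<alpha> * esum (tensor_apply k P x)) *\<^sub>R v" for x
  have "closed S"
    unfolding S_def
    by (intro closed_Collect_conj closed_Collect_all closed_Collect_le closed_Collect_eq
        continuous_on_esum continuous_on_const continuous_on_component continuous_on_id)
  moreover have "S \<subseteq> cball 0 1"
  proof
    fix x assume "x \<in> S"
    then have "norm x \<le> 1"
      using norm_le_l1_cart[of x] norm1_eq_esum[of x] by (simp add: S_def norm1_def)
    then show "x \<in> cball 0 1" by simp
  qed
  ultimately have "compact S"
    using bounded_cball bounded_subset compact_eq_bounded_closed by blast
  moreover have "convex S"
    unfolding convex_def S_def by (auto simp: esum_add esum_scaleR)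
  moreover have "(\<chi> i. 1 / real CARD('n)) \<in> S"
    by (simp add: S_def esum_def)
  moreover have "continuous_on S f"
    unfolding f_def
    by (intro continuous_on_add continuous_on_scaleR continuous_on_const continuous_on_diff
        continuous_on_mult continuous_on_tensor_apply continuous_on_compose2[OF continuous_on_esum]) auto
  moreover have "f \<in> S \<rightarrow> S"
  proof
    fix x assume "x \<in> S"
    then have x: "\<forall>i. 0 \<le> x $ i" "esum x = 1" by (auto simp: S_def)
    have "esum (tensor_apply k P x) \<le> 1"
      using esum_tensor_apply_le[OF P x(1)] x(2) by simp
    then have "0 \<le> 1 - \<alpha> * esum (tensor_apply k P x)"
      using \<alpha> mult_le_one[OF \<alpha>(2) esum_nonneg] tensor_apply_nonneg[OF P x(1)] by fastforce
    then show "f x \<in> S"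
      using tensor_apply_nonneg[OF P x(1)] \<alpha> v
      by (simp add: S_def f_def stochastic_vec_def esum_add esum_scaleR)
  qed
  ultimately obtain x where "x \<in> S" "f x = x"
    using brouwer by blast
  then show ?thesis using that by (auto simp: S_def f_def)
qed

lemma mlppr_solution_exists:
  assumes k: "k \<ge> 2" and P: "col_substochastic k P" and v: "stochastic_vec v"
    and \<alpha>: "0 \<le> \<alpha>" "\<alpha> < 1"
  shows "\<exists>y\<in>Delta_set k \<alpha>. mlppr_lhs k P \<alpha> y = v"
proof -
  obtain x where x: "\<forall>i. 0 \<le> x $ i" "esum x = 1"
    and fixed: "x = \<alpha> *\<^sub>R tensor_apply k P x + (1 - \<alpha> * esum (tensor_apply k P x)) *\<^sub>R v"
    using mlppr_simplex_fixed_point[OF P v \<alpha>(1) less_imp_le[OF \<alpha>(2)]] by blast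
  define w where "w = 1 - \<alpha> * esum (tensor_apply k P x)"
  have "esum (tensor_apply k P x) \<le> 1"
    using esum_tensor_apply_le[OF P x(1)] x(2) by simp
  then have w: "1 - \<alpha> \<le> w"
    unfolding w_def using mult_left_mono[OF _ \<alpha>(1)] by fastforce
  then have "0 < w" using \<alpha>(2) by linarith
  have k1: "real (k - 1) = real k - 1" using k by (simp add: of_nat_diff)
  define s where "s = w powr (- 1 / (real k - 1))"
  have "s ^ (k - 1) = w powr (real (k - 1) * (- 1 / (real k - 1)))"
    unfolding s_def by (rule powr_power) (use \<open>0 < w\<close> in simp)
  also have "real (k - 1) * (- 1 / (real k - 1)) = - 1"
    using k by (simp add: k1)
  finally have s: "0 < s" "s ^ (k - 1) = 1 / w"
    using \<open>0 < w\<close> by (simp_all add: s_def powr_neg_one)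
  have "s \<le> (1 - \<alpha>) powr (- 1 / (real k - 1))"
    unfolding s_def using k \<alpha>(2) w by (intro powr_mono2') auto
  then have "s *\<^sub>R x \<in> Delta_set k \<alpha>"
    using x s by (simp add: Delta_set_def esum_scaleR)
  have "mlppr_lhs k P \<alpha> (s *\<^sub>R x) = s ^ (k - 1) *\<^sub>R (x - \<alpha> *\<^sub>R tensor_apply k P x)"
    using x(2) power_minus_2_mult_self[OF k, of s]
    by (simp add: esum_scaleR tensor_apply_scaleR algebra_simps)
  also have "x - \<alpha> *\<^sub>R tensor_apply k P x = w *\<^sub>R v"
    using fixed unfolding w_def by (metis add_diff_cancel_left')
  also have "s ^ (k - 1) *\<^sub>R w *\<^sub>R v = v"
    using s \<open>0 < w\<close> by simp
  finally show ?thesis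
    using \<open>s *\<^sub>R x \<in> Delta_set k \<alpha>\<close> by blast
qed

theorem corollary3p11:
  fixes k :: nat and P :: "'n::finite list \<Rightarrow> real" and v :: "real^'n" and \<alpha> :: real
  assumes "k \<ge> 2"
    and "col_substochastic k P"
    and "stochastic_vec v"
    and "0 \<le> \<alpha>" and "\<alpha> < 1"
    and "(2 * real k - 3) * \<alpha> * (1 - \<alpha>) powr (- (real k - 2) / (real k - 1)) < 1"
  shows "\<exists>!y. y \<in> Delta_set k \<alpha> \<and>
           (esum y) ^ (k - 2) *\<^sub>R y - \<alpha> *\<^sub>R tensor_apply k P y = v"
proof (rule ex_ex1I)
  show "\<exists>y. y \<in> Delta_set k \<alpha> \<and> mlppr_lhs k P \<alpha> y = v"
    using mlppr_solution_exists[OF assms(1-5)] by blast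
next
  define c where "c = (1 - \<alpha>) powr (- 1 / (real k - 1))"
  have "c ^ (k - 2) = (1 - \<alpha>) powr (real (k - 2) * (- 1 / (real k - 1)))"
    unfolding c_def by (rule powr_power) (use assms(5) in simp)
  also have "real (k - 2) * (- 1 / (real k - 1)) = - (real k - 2) / (real k - 1)"
    using assms(1) by (simp add: of_nat_diff field_simps)
  finally have contraction: "(2 * real k - 3) * \<alpha> * c ^ (k - 2) < 1"
    using assms(6) by simp
  have Delta: "Delta_set k \<alpha> = {y. (\<forall>i. 0 \<le> y $ i) \<and> esum y \<le> c}"
    by (simp add: Delta_set_def c_def)
  have "esum v = 1"
    using assms(3) by (simp add: stochastic_vec_def)
  then show "y = z"
    if "y \<in> Delta_set k \<alpha> \<and> mlppr_lhs k P \<alpha> y = v"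
      and "z \<in> Delta_set k \<alpha> \<and> mlppr_lhs k P \<alpha> z = v"
    for y z
    using that contraction mlppr_solution_unique[OF assms(1,2,4)] unfolding Delta by blast
qed

end
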